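(* Let $q$ be a power of an odd prime with $q\equiv1\pmod4$, let $k$ be a divisor of $q-1$ such that $e=(q-1)/k$ is even. If $(q,k)$ gives a $3$-design, then $k\equiv 1,2,5,10,13$ or $17\pmod{24}$.
   Context: The group $\mathrm{PSL}(2,q)$ acts on $\mathrm{PG}(1,q)=\mathbb{F}_q\cup\{\infty\}$ by linear fractional transformations $z\mapsto (az+b)/(cz+d)$ with $ad-bc$ a nonzero square in $\mathbb{F}_q$. A $k$-subset $B$ of $\mathrm{PG}(1,q)$ is a starter of a $3$-design if its $\mathrm{PSL}(2,q)$-orbit is the block set of a $3$-$(q+1,k,\lambda)$ design for some positive integer $\lambda$. "$(q,k)$ gives a $3$-design" means the unique subgroup of order $k$ of $\mathbb{F}_q^\times$ is such a starter. *)

theory Defs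
  imports "HOL-Computational_Algebra.Primes"
begin

text \<open>The projective line PG(1,q) over a finite field 'a is modelled as 'a option:
  Some z is the point z of F_q, None is the point at infinity.\<close>

definition lft :: "'a::field \<Rightarrow> 'a \<Rightarrow> 'a \<Rightarrow> 'a \<Rightarrow> 'a option \<Rightarrow> 'a option" where
  "lft a b c d P = (case P of
      None \<Rightarrow> (if c = 0 then None else Some (a / c))
    | Some z \<Rightarrow> (if c * z + d = 0 then None else Some ((a * z + b) / (c * z + d))))"

definition PSL2 :: "('a::field option \<Rightarrow> 'a option) set" where
  "PSL2 = {lft a b c d | a b c d. \<exists>s. s \<noteq> 0 \<and> a * d - b * c = s ^ 2}"

definition PSL2_orbit :: "'a::field option set \<Rightarrow> 'a option set set" where
  "PSL2_orbit B = {g ` B | g. g \<in> PSL2}"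

text \<open>B is a starter of a 3-design: its PSL(2,q)-orbit is the block set of a
  3-(q+1,|B|,lambda) design for some positive integer lambda, i.e. every 3-subset of
  PG(1,q) lies in exactly lambda blocks of the orbit.\<close>

definition starter_3design :: "'a::{field,finite} option set \<Rightarrow> bool" where
  "starter_3design B \<longleftrightarrow>
     (\<exists>lam::nat. lam > 0 \<and>
        (\<forall>T :: 'a option set. card T = 3 \<longrightarrow> card {X \<in> PSL2_orbit B. T \<subseteq> X} = lam))"

text \<open>The subgroup of order k of the multiplicative group (for k dividing q-1).\<close>

definition mult_subgroup :: "nat \<Rightarrow> 'a::field set" where
  "mult_subgroup k = {x. x \<noteq> 0 \<and> x ^ k = 1}"

definition gives_3design :: "'a::{field,finite} itself \<Rightarrow> nat \<Rightarrow> bool" where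
  "gives_3design (_ :: 'a itself) k \<longleftrightarrow>
     starter_3design (Some ` (mult_subgroup k :: 'a set))"

end

(*
  A map in PSL(2,q) multiplies the product of the three 2x2 minors of the homogeneous coordinates
  of an ordered triple of points of PG(1,q) by a nonzero square, whereas z |-> n z with n a
  nonsquare multiplies it by a nonsquare. Double counting the blocks through ordered triples
  therefore shows that a starter of a 3-design contains equally many ordered triples of square and
  of nonsquare class.

  For the subgroup B of order k, whose elements are squares because e is even, and with -1 a square
  because q = 1 (mod 4), scaling (x, x y, x z) to (1, y, z) reduces this to pairs (y, z), so the
  number Z of nonsquare pairs satisfies 2 Z = (k - 1) (k - 2). The class of (y, z) is preserved by
  (z, y), (1/y, 1/z) and the rotation (z/y, 1/y); counting orbits gives Z even, Z mod 3 <> 1, and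
  4 | Z when k = 2 (mod 4), and these congruences determine the possible k mod 24.
*)
theory Submission
  imports Defs "HOL-Computational_Algebra.Polynomial" "HOL-Library.Cardinality"
begin

section \<open>Orbit counting\<close>

lemma dvd_card_if_orbits:
  assumes "finite X"
    and orbit: "\<And>x. x \<in> X \<Longrightarrow> x \<in> orb x \<and> orb x \<subseteq> X \<and> card (orb x) = n"
    and orbit_eq: "\<And>x y. x \<in> X \<Longrightarrow> y \<in> orb x \<Longrightarrow> orb y = orb x"
  shows "n dvd card X"
proof -
  have X: "X = \<Union> (orb ` X)" using orbit by blast
  have "n dvd card (\<Union> (orb ` X))"
  proof (rule dvd_partition)
    show "finite (\<Union> (orb ` X))" using X assms(1) by simp
    show "\<forall>c\<in>orb ` X. n dvd card c" using orbit by auto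
    show "\<forall>c1\<in>orb ` X. \<forall>c2\<in>orb ` X. c1 \<noteq> c2 \<longrightarrow> c1 \<inter> c2 = {}"
      using orbit orbit_eq by (smt (verit) disjoint_iff image_iff subsetD)
  qed
  then show ?thesis using X by simp
qed

lemma even_card_if_involution:
  assumes "finite X" "\<And>x. x \<in> X \<Longrightarrow> f x \<in> X \<and> f (f x) = x \<and> f x \<noteq> x"
  shows "even (card X)"
proof (rule dvd_card_if_orbits[where orb = "\<lambda>x. {x, f x}"])
  fix x assume x: "x \<in> X"
  then show "x \<in> {x, f x} \<and> {x, f x} \<subseteq> X \<and> card {x, f x} = 2"
    using assms(2)[OF x] by auto
  fix y assume "y \<in> {x, f x}"
  then show "{y, f y} = {x, f x}" using assms(2)[OF x] by auto
qed fact

lemma three_dvd_card_if_order_three: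
  assumes "finite X" "\<And>x. x \<in> X \<Longrightarrow> f x \<in> X \<and> f (f (f x)) = x \<and> f x \<noteq> x"
  shows "3 dvd card X"
proof (rule dvd_card_if_orbits[where orb = "\<lambda>x. {x, f x, f (f x)}"])
  fix x assume x: "x \<in> X"
  have "f (f x) \<noteq> x" "f (f x) \<noteq> f x" using assms(2)[OF x] by metis+
  then show "x \<in> {x, f x, f (f x)} \<and> {x, f x, f (f x)} \<subseteq> X \<and> card {x, f x, f (f x)} = 3"
    using x assms(2)[OF x] assms(2)[of "f x"] by auto
  fix y assume "y \<in> {x, f x, f (f x)}"
  then show "{y, f y, f (f y)} = {x, f x, f (f x)}" using assms(2)[OF x] by auto
qed fact

lemma four_dvd_card_if_free_klein_action:
  assumes "finite X"
    and "\<And>x. x \<in> X \<Longrightarrow> f x \<in> X \<and> g x \<in> X \<and> f (f x) = x \<and> g (g x) = x \<and> f (g x) = g (f x)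
          \<and> f x \<noteq> x \<and> g x \<noteq> x \<and> f (g x) \<noteq> x"
  shows "4 dvd card X"
proof (rule dvd_card_if_orbits[where orb = "\<lambda>x. {x, f x, g x, f (g x)}"])
  fix x assume x: "x \<in> X"
  note hx = assms(2)[OF x] and hgx = assms(2)[of "g x"]
  have ffg: "f (f (g x)) = g x" and gfg: "g (f (g x)) = f x" using hx hgx by metis+
  have "f x \<noteq> g x" "f x \<noteq> f (g x)" "g x \<noteq> f (g x)" using hx hgx by metis+
  then show "x \<in> {x, f x, g x, f (g x)} \<and> {x, f x, g x, f (g x)} \<subseteq> X \<and> card {x, f x, g x, f (g x)} = 4"
    using x hx hgx by auto
  fix y assume "y \<in> {x, f x, g x, f (g x)}"
  then consider "y = x" | "y = f x" | "y = g x" | "y = f (g x)" by blast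
  then show "{y, f y, g y, f (g y)} = {x, f x, g x, f (g x)}"
    by cases (use hx ffg gfg in auto)
qed fact

lemma card_le_mult_card_if_fibres_le:
  assumes "finite B" "f ` A \<subseteq> B" "\<And>y. y \<in> B \<Longrightarrow> card {x \<in> A. f x = y} \<le> m"
  shows "card A \<le> m * card B"
proof -
  have "A = (\<Union>y\<in>B. {x \<in> A. f x = y})" using assms(2) by blast
  then have "card A \<le> (\<Sum>y\<in>B. card {x \<in> A. f x = y})" by (metis card_UN_le assms(1))
  also have "\<dots> \<le> (\<Sum>y\<in>B. m)" using assms(3) by (rule sum_mono)
  finally show ?thesis by (simp add: mult.commute)
qed

section \<open>Squares in finite fields of odd order\<close>

definition nonzero_square :: "'a::field \<Rightarrow> bool" where
  "nonzero_square y \<longleftrightarrow> (\<exists>s. s \<noteq> 0 \<and> y = s ^ 2)"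

lemma nonzero_square_imp_nonzero: "nonzero_square y \<Longrightarrow> y \<noteq> 0"
  unfolding nonzero_square_def by auto

lemma nonzero_square_mult_square:
  assumes "c \<noteq> 0"
  shows "nonzero_square (c ^ 2 * d) \<longleftrightarrow> nonzero_square d"
proof
  assume "nonzero_square (c ^ 2 * d)"
  then obtain s where "s \<noteq> 0" "c ^ 2 * d = s ^ 2" unfolding nonzero_square_def by auto
  then have "s / c \<noteq> 0 \<and> d = (s / c) ^ 2" using assms by (simp add: power_divide field_simps)
  then show "nonzero_square d" unfolding nonzero_square_def by blast
next
  assume "nonzero_square d"
  then obtain s where "s \<noteq> 0" "d = s ^ 2" unfolding nonzero_square_def by auto
  then have "c * s \<noteq> 0 \<and> c ^ 2 * d = (c * s) ^ 2" using assms by (simp add: power_mult_distrib)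
  then show "nonzero_square (c ^ 2 * d)" unfolding nonzero_square_def by blast
qed

lemma nonzero_square_mult:
  "nonzero_square m \<Longrightarrow> nonzero_square (m * d) \<longleftrightarrow> nonzero_square d"
  using nonzero_square_mult_square unfolding nonzero_square_def by (metis mult.commute)

lemma card_roots_of_unity_le:
  assumes "n \<ge> 1"
  shows "card {x :: 'a::idom. x ^ n = 1} \<le> n"
proof -
  define p :: "'a poly" where "p = monom 1 n - 1"
  have roots: "{x. poly p x = 0} = {x. x ^ n = 1}" by (simp add: p_def poly_monom)
  have "degree p = n"
    unfolding p_def using assms degree_add_eq_left[of "- 1" "monom (1::'a) n"]
    by (simp add: degree_monom_eq)
  moreover have "poly p 0 \<noteq> 0" using assms by (simp add: p_def poly_monom power_0_left)
  then have "p \<noteq> 0" by auto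
  ultimately show ?thesis using card_poly_roots_bound roots by metis
qed

lemma power_card_minus_one:
  fixes x :: "'a::{field,finite}"
  assumes "x \<noteq> 0"
  shows "x ^ (CARD('a) - 1) = 1"
proof -
  define N where "N = (UNIV - {0::'a})"
  have "(*) x ` N = N"
  proof
    show "N \<subseteq> (*) x ` N"
    proof
      fix y assume "y \<in> N"
      then have "y / x \<in> N" "y = x * (y / x)" unfolding N_def using assms by auto
      then show "y \<in> (*) x ` N" by blast
    qed
  qed (use assms in \<open>auto simp: N_def\<close>)
  moreover have "inj_on ((*) x) N" using assms by (auto simp: inj_on_def)
  ultimately have "(\<Prod>y\<in>N. x * y) = \<Prod>N"
    using prod.reindex[of "(*) x" N id] by simp
  moreover have "(\<Prod>y\<in>N. x * y) = x ^ card N * \<Prod>N" by (simp add: prod.distrib)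
  moreover have "\<Prod>N \<noteq> 0" unfolding N_def by (simp add: prod_zero_iff)
  ultimately have "x ^ card N = 1" by simp
  then show ?thesis unfolding N_def by (simp add: card_Diff_subset)
qed

lemma card_field_ge_two: "CARD('a::{field,finite}) \<ge> 2"
proof -
  have "card {0::'a, 1} \<le> CARD('a)" by (rule card_mono) auto
  then show ?thesis by simp
qed

lemma two_neq_zero_if_odd_card:
  assumes "odd CARD('a::{field,finite})"
  shows "(2::'a) \<noteq> 0"
proof
  assume "(2::'a) = 0"
  then have "x + 1 + 1 = x" for x :: 'a by (metis add.assoc add_0_right one_add_one)
  then have "even CARD('a)" by (intro even_card_if_involution[where f = "\<lambda>x. x + 1"]) auto
  then show False using assms by simp
qed

(* Euler's criterion: with h = (q - 1) div 2, the nonzero squares lie among the at most h roots of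
   y ^ h = 1, and since squaring is at most two-to-one there are at least h of them. *)
lemma nonzero_square_iff_power_half:
  fixes y :: "'a::{field,finite}"
  assumes "odd CARD('a)"
  shows "nonzero_square y \<longleftrightarrow> y ^ ((CARD('a) - 1) div 2) = 1"
proof -
  define h where "h = (CARD('a) - 1) div 2"
  have q: "CARD('a) - 1 = 2 * h" and h: "h \<ge> 1"
    using assms card_field_ge_two[where 'a = 'a] unfolding h_def by presburger+
  define S where "S = {y::'a. nonzero_square y}"
  define R where "R = {y::'a. y ^ h = 1}"
  have "S \<subseteq> R"
  proof
    fix y assume "y \<in> S"
    then obtain s where "s \<noteq> 0" "y = s ^ 2" unfolding S_def nonzero_square_def by auto
    then show "y \<in> R" using power_card_minus_one[of s] q unfolding R_def by (simp add: power_mult)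
  qed
  moreover have "card R \<le> card S"
  proof -
    have "card (UNIV - {0::'a}) \<le> 2 * card S"
    proof (rule card_le_mult_card_if_fibres_le[where f = "\<lambda>s. s ^ 2"])
      show "(\<lambda>s. s ^ 2) ` (UNIV - {0}) \<subseteq> S" unfolding S_def nonzero_square_def by auto
      fix y assume "y \<in> S"
      then obtain s where s: "y = s ^ 2" unfolding S_def nonzero_square_def by auto
      have "{x \<in> UNIV - {0}. x ^ 2 = y} \<subseteq> {s, -s}"
        using s by (auto simp: power2_eq_iff)
      then have "card {x \<in> UNIV - {0}. x ^ 2 = y} \<le> card {s, -s}" by (intro card_mono) auto
      also have "\<dots> \<le> 2" by (simp add: card_insert_le_m1)
      finally show "card {x \<in> UNIV - {0}. x ^ 2 = y} \<le> 2" .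
    qed simp
    then have "h \<le> card S" using q by (simp add: card_Diff_subset)
    moreover have "card R \<le> h" unfolding R_def using card_roots_of_unity_le[OF h] .
    ultimately show ?thesis by simp
  qed
  ultimately have "S = R" by (simp add: card_seteq)
  then show ?thesis unfolding S_def R_def h_def by blast
qed

lemma power_half_eq_minus_one_if_nonsquare:
  fixes y :: "'a::{field,finite}"
  assumes "odd CARD('a)" "y \<noteq> 0" "\<not> nonzero_square y"
  shows "y ^ ((CARD('a) - 1) div 2) = -1"
proof -
  define h where "h = (CARD('a) - 1) div 2"
  have "CARD('a) - 1 = h * 2" using assms(1) card_field_ge_two[where 'a = 'a] unfolding h_def by presburger
  then have "(y ^ h) ^ 2 = 1" using power_card_minus_one[OF assms(2)] by (simp flip: power_mult)
  then have "y ^ h = 1 \<or> y ^ h = -1" by (simp add: power2_eq_1_iff)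
  then show ?thesis using assms nonzero_square_iff_power_half unfolding h_def by blast
qed

lemma nonzero_square_mult_nonsquare:
  fixes n d :: "'a::{field,finite}"
  assumes "odd CARD('a)" "n \<noteq> 0" "\<not> nonzero_square n" "d \<noteq> 0"
  shows "nonzero_square (n * d) \<longleftrightarrow> \<not> nonzero_square d"
proof (cases "nonzero_square d")
  case True
  then show ?thesis using assms(3) nonzero_square_mult[of d n] by (simp add: mult.commute)
next
  case False
  then show ?thesis
    using assms power_half_eq_minus_one_if_nonsquare[of n] power_half_eq_minus_one_if_nonsquare[of d]
    by (simp add: nonzero_square_iff_power_half power_mult_distrib)
qed

lemma ex_nonsquare:
  assumes "odd CARD('a::{field,finite})"
  shows "\<exists>n::'a. n \<noteq> 0 \<and> \<not> nonzero_square n"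
proof (rule ccontr)
  define h where "h = (CARD('a) - 1) div 2"
  have h: "h \<ge> 1" "h < CARD('a) - 1"
    using assms card_field_ge_two[where 'a = 'a] unfolding h_def by presburger+
  assume "\<not> ?thesis"
  then have "UNIV - {0} \<subseteq> {y::'a. y ^ h = 1}"
    using nonzero_square_iff_power_half[OF assms] unfolding h_def by blast
  then have "card (UNIV - {0::'a}) \<le> h"
    using card_roots_of_unity_le[OF h(1), where 'a = 'a] by (meson card_mono finite le_trans)
  then show False using h(2) by (simp add: card_Diff_subset)
qed

section \<open>The projective line\<close>

fun hom_coords :: "'a::field option \<Rightarrow> 'a \<times> 'a" where
  "hom_coords None = (1, 0)"
| "hom_coords (Some z) = (z, 1)"

fun det2 :: "'a::comm_ring \<times> 'a \<Rightarrow> 'a \<times> 'a \<Rightarrow> 'a" where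
  "det2 (x, y) (x', y') = x * y' - y * x'"

definition triple_det :: "'a::field option \<Rightarrow> 'a option \<Rightarrow> 'a option \<Rightarrow> 'a" where
  "triple_det P Q R = det2 (hom_coords P) (hom_coords Q) * det2 (hom_coords Q) (hom_coords R)
     * det2 (hom_coords P) (hom_coords R)"

definition diff_prod :: "'a::comm_ring \<Rightarrow> 'a \<Rightarrow> 'a \<Rightarrow> 'a" where
  "diff_prod x y z = (x - y) * (y - z) * (x - z)"

lemma triple_det_Some: "triple_det (Some x) (Some y) (Some z) = diff_prod x y z"
  by (simp add: triple_det_def diff_prod_def)

lemma det2_hom_coords_eq_0_iff: "det2 (hom_coords P) (hom_coords Q) = 0 \<longleftrightarrow> P = Q"
  by (cases P; cases Q) auto

lemma triple_det_eq_0_iff: "triple_det P Q R = 0 \<longleftrightarrow> \<not> distinct [P, Q, R]"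
  by (auto simp: triple_det_def det2_hom_coords_eq_0_iff)

lemma hom_coords_lft:
  fixes a b c d :: "'a::field"
  assumes "a * d - b * c \<noteq> 0"
  shows "\<exists>m. m \<noteq> 0 \<and> hom_coords (lft a b c d P)
    = (m * (a * fst (hom_coords P) + b * snd (hom_coords P)),
       m * (c * fst (hom_coords P) + d * snd (hom_coords P)))"
proof (cases P)
  case None
  show ?thesis
  proof (cases "c = 0")
    case True
    then have "a \<noteq> 0" using assms by auto
    then show ?thesis using True None by (intro exI[of _ "1 / a"]) (simp add: lft_def)
  next
    case False
    then show ?thesis using None by (intro exI[of _ "1 / c"]) (simp add: lft_def)
  qed
next
  case (Some z)
  show ?thesis
  proof (cases "c * z + d = 0")
    case True
    then have "d = - c * z" by (simp add: eq_neg_iff_add_eq_0 add.commute)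
    then have "a * d - b * c = - c * (a * z + b)" by (simp add: algebra_simps)
    then have "a * z + b \<noteq> 0" using assms by auto
    then show ?thesis using True Some by (intro exI[of _ "1 / (a * z + b)"]) (simp add: lft_def)
  next
    case False
    then show ?thesis using Some by (intro exI[of _ "1 / (c * z + d)"]) (simp add: lft_def)
  qed
qed

lemma det2_hom_coords_lft:
  fixes a b c d :: "'a::field"
  assumes "a * d - b * c \<noteq> 0"
  obtains \<mu> where "\<And>P. \<mu> P \<noteq> 0"
    "\<And>P Q. det2 (hom_coords (lft a b c d P)) (hom_coords (lft a b c d Q))
       = \<mu> P * \<mu> Q * (a * d - b * c) * det2 (hom_coords P) (hom_coords Q)"
proof -
  have "\<forall>P. \<exists>m. m \<noteq> 0 \<and> hom_coords (lft a b c d P)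
      = (m * (a * fst (hom_coords P) + b * snd (hom_coords P)),
         m * (c * fst (hom_coords P) + d * snd (hom_coords P)))"
    using hom_coords_lft[OF assms] by blast
  from choice[OF this] obtain \<mu> where "\<forall>P. \<mu> P \<noteq> 0 \<and> hom_coords (lft a b c d P)
      = (\<mu> P * (a * fst (hom_coords P) + b * snd (hom_coords P)),
         \<mu> P * (c * fst (hom_coords P) + d * snd (hom_coords P)))" ..
  note \<mu> = spec[OF this]
  have det2_linear: "det2 (m * (a * x + b * y), m * (c * x + d * y)) (n * (a * x' + b * y'), n * (c * x' + d * y'))
      = m * n * (a * d - b * c) * det2 (x, y) (x', y')" for m n x y x' y'
    by (simp add: algebra_simps)
  have "det2 (hom_coords (lft a b c d P)) (hom_coords (lft a b c d Q))
      = \<mu> P * \<mu> Q * (a * d - b * c) * det2 (hom_coords P) (hom_coords Q)" for P Q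
  proof -
    obtain x y x' y' where "hom_coords P = (x, y)" "hom_coords Q = (x', y')" by fastforce
    then show ?thesis using \<mu>[of P] \<mu>[of Q] det2_linear by simp
  qed
  with \<mu> show ?thesis by (intro that) auto
qed

lemma inj_lft:
  assumes "a * d - b * c \<noteq> 0"
  shows "inj (lft a b c d)"
proof
  obtain \<mu> where \<mu>: "\<And>P. \<mu> P \<noteq> 0"
    "\<And>P Q. det2 (hom_coords (lft a b c d P)) (hom_coords (lft a b c d Q))
       = \<mu> P * \<mu> Q * (a * d - b * c) * det2 (hom_coords P) (hom_coords Q)"
    using det2_hom_coords_lft[OF assms] by blast
  fix P Q assume "lft a b c d P = lft a b c d Q"
  then have "\<mu> P * \<mu> Q * (a * d - b * c) * det2 (hom_coords P) (hom_coords Q) = 0"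
    unfolding \<mu>(2)[symmetric] by (simp add: det2_hom_coords_eq_0_iff)
  then show "P = Q" using \<mu>(1)[of P] \<mu>(1)[of Q] assms by (simp add: det2_hom_coords_eq_0_iff)
qed

lemma triple_det_lft:
  assumes "a * d - b * c \<noteq> 0"
  shows "\<exists>m. m \<noteq> 0 \<and>
    triple_det (lft a b c d P) (lft a b c d Q) (lft a b c d R) = m ^ 2 * (a * d - b * c) * triple_det P Q R"
proof -
  obtain \<mu> where \<mu>: "\<And>P. \<mu> P \<noteq> 0"
    "\<And>P Q. det2 (hom_coords (lft a b c d P)) (hom_coords (lft a b c d Q))
       = \<mu> P * \<mu> Q * (a * d - b * c) * det2 (hom_coords P) (hom_coords Q)"
    using det2_hom_coords_lft[OF assms] by blast
  have "triple_det (lft a b c d P) (lft a b c d Q) (lft a b c d R)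
      = (\<mu> P * \<mu> Q * \<mu> R * (a * d - b * c)) ^ 2 * (a * d - b * c) * triple_det P Q R"
    unfolding triple_det_def \<mu>(2) by (simp add: power2_eq_square)
  moreover have "\<mu> P * \<mu> Q * \<mu> R * (a * d - b * c) \<noteq> 0" using \<mu>(1) assms by simp
  ultimately show ?thesis by blast
qed

lemma PSL2_elim:
  assumes "g \<in> PSL2"
  obtains a b c d where "g = lft a b c d" "nonzero_square (a * d - b * c)"
  using assms unfolding PSL2_def nonzero_square_def by blast

lemma inj_PSL2: "g \<in> PSL2 \<Longrightarrow> inj g"
  by (auto elim!: PSL2_elim intro: inj_lft dest: nonzero_square_imp_nonzero)

lemma nonzero_square_triple_det_PSL2:
  assumes "g \<in> PSL2"
  shows "nonzero_square (triple_det (g P) (g Q) (g R)) \<longleftrightarrow> nonzero_square (triple_det P Q R)"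
proof -
  obtain a b c d where g: "g = lft a b c d" and det: "nonzero_square (a * d - b * c)"
    using assms by (rule PSL2_elim)
  obtain m where "m \<noteq> 0"
    "triple_det (g P) (g Q) (g R) = m ^ 2 * ((a * d - b * c) * triple_det P Q R)"
    using triple_det_lft[OF nonzero_square_imp_nonzero[OF det], where P = P and Q = Q and R = R]
    unfolding g by (auto simp: mult.assoc)
  then show ?thesis
    using nonzero_square_mult_square[of m] nonzero_square_mult[OF det] by simp
qed

lemma id_in_PSL2: "id \<in> PSL2"
proof -
  have "\<exists>s::'a. s \<noteq> 0 \<and> 1 * 1 - 0 * 0 = s ^ 2" by (intro exI[of _ 1]) simp
  then have "lft (1::'a) 0 0 1 \<in> PSL2" unfolding PSL2_def by blast
  moreover have "lft (1::'a) 0 0 1 = id"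
  proof
    fix P :: "'a option" show "lft 1 0 0 1 P = id P" by (cases P) (simp_all add: lft_def)
  qed
  ultimately show ?thesis by simp
qed

section \<open>Square classes of triples in a 3-design\<close>

lemma card_triples_in_image:
  assumes "inj g" "\<And>P Q R. C (g P) (g Q) (g R) \<longleftrightarrow> C P Q R"
  shows "card {(P, Q, R). C P Q R \<and> {P, Q, R} \<subseteq> g ` S} = card {(P, Q, R). C P Q R \<and> {P, Q, R} \<subseteq> S}"
proof -
  define g3 where "g3 = map_prod g (map_prod g g)"
  have "{(P, Q, R). C P Q R \<and> {P, Q, R} \<subseteq> g ` S} = g3 ` {(P, Q, R). C P Q R \<and> {P, Q, R} \<subseteq> S}"
  proof (intro equalityI subsetI)
    fix t assume t: "t \<in> {(P, Q, R). C P Q R \<and> {P, Q, R} \<subseteq> g ` S}"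
    then obtain P Q R where PQR: "t = (g P, g Q, g R)" "P \<in> S" "Q \<in> S" "R \<in> S"
      by (auto split: prod.splits)
    then have "C P Q R" using t assms(2) by auto
    then show "t \<in> g3 ` {(P, Q, R). C P Q R \<and> {P, Q, R} \<subseteq> S}"
      using PQR unfolding g3_def by force
  qed (use assms(2) in \<open>auto simp: g3_def\<close>)
  moreover have "inj g3" unfolding g3_def using assms(1) by (simp add: prod.inj_map)
  ultimately show ?thesis by (simp add: card_image inj_on_subset)
qed

lemma orbit_design_triple_count:
  fixes G :: "('b::finite \<Rightarrow> 'b) set" and S :: "'b set" and C :: "'b \<Rightarrow> 'b \<Rightarrow> 'b \<Rightarrow> bool"
    and lam :: nat
  assumes inj: "\<And>g. g \<in> G \<Longrightarrow> inj g"
    and design: "\<And>T. card T = 3 \<Longrightarrow> card {X \<in> {g ` S | g. g \<in> G}. T \<subseteq> X} = lam"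
    and C_distinct: "\<And>P Q R. C P Q R \<Longrightarrow> distinct [P, Q, R]"
    and invariant: "\<And>g P Q R. g \<in> G \<Longrightarrow> C (g P) (g Q) (g R) \<longleftrightarrow> C P Q R"
  shows "lam * card {(P, Q, R). C P Q R}
    = card {g ` S | g. g \<in> G} * card {(P, Q, R). C P Q R \<and> {P, Q, R} \<subseteq> S}"
proof -
  define Orb where "Orb = {g ` S | g. g \<in> G}"
  define A where "A = {(P, Q, R). C P Q R}"
  define pts :: "'b \<times> 'b \<times> 'b \<Rightarrow> 'b set" where "pts = (\<lambda>(P, Q, R). {P, Q, R})"
  have in_X: "{t \<in> A. pts t \<subseteq> X} = {(P, Q, R). C P Q R \<and> {P, Q, R} \<subseteq> X}" for X
    unfolding A_def pts_def by auto
  have "card {X \<in> Orb. pts t \<subseteq> X} = lam" if "t \<in> A" for t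
  proof -
    obtain P Q R where "t = (P, Q, R)" "C P Q R" using \<open>t \<in> A\<close> unfolding A_def by blast
    then have "card (pts t) = 3" using distinct_card[OF C_distinct] unfolding pts_def by simp
    then show ?thesis using design unfolding Orb_def by blast
  qed
  then have "lam * card A = (\<Sum>t\<in>A. card {X \<in> Orb. pts t \<subseteq> X})" by simp
  also have "\<dots> = (\<Sum>X\<in>Orb. card {t \<in> A. pts t \<subseteq> X})"
    using sum.swap_restrict[of A Orb "\<lambda>_ _. 1::nat" "\<lambda>t X. pts t \<subseteq> X"] by simp
  also have "\<dots> = (\<Sum>X\<in>Orb. card {t \<in> A. pts t \<subseteq> S})"
  proof (rule sum.cong[OF refl])
    fix X assume "X \<in> Orb"
    then obtain g where "g \<in> G" "X = g ` S" unfolding Orb_def by blast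
    then show "card {t \<in> A. pts t \<subseteq> X} = card {t \<in> A. pts t \<subseteq> S}"
      unfolding in_X using card_triples_in_image inj invariant by blast
  qed
  also have "\<dots> = card Orb * card {t \<in> A. pts t \<subseteq> S}" by simp
  finally show ?thesis unfolding in_X[symmetric] A_def[symmetric] Orb_def[symmetric] .
qed

lemma nonzero_square_triple_det_scale_by_nonsquare:
  fixes n :: "'a::{field,finite}"
  assumes "odd CARD('a)" "n \<noteq> 0" "\<not> nonzero_square n" "distinct [P, Q, R]"
  shows "nonzero_square (triple_det (lft n 0 0 1 P) (lft n 0 0 1 Q) (lft n 0 0 1 R))
    \<longleftrightarrow> \<not> nonzero_square (triple_det P Q R)"
proof -
  have det: "n * 1 - 0 * 0 \<noteq> 0" using assms(2) by simp
  obtain m where m: "m \<noteq> 0"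
    "triple_det (lft n 0 0 1 P) (lft n 0 0 1 Q) (lft n 0 0 1 R) = m ^ 2 * (n * triple_det P Q R)"
    using triple_det_lft[OF det, where P = P and Q = Q and R = R] by auto
  have "triple_det P Q R \<noteq> 0" using assms(4) triple_det_eq_0_iff by blast
  then show ?thesis
    using m nonzero_square_mult_square[OF m(1)] nonzero_square_mult_nonsquare[OF assms(1-3)] by simp
qed

lemma starter_3design_square_balance:
  fixes S :: "'a::{field,finite} option set"
  assumes "starter_3design S" "odd CARD('a)"
  shows "card {(P, Q, R). distinct [P, Q, R] \<and> nonzero_square (triple_det P Q R) \<and> {P, Q, R} \<subseteq> S}
    = card {(P, Q, R). distinct [P, Q, R] \<and> \<not> nonzero_square (triple_det P Q R) \<and> {P, Q, R} \<subseteq> S}"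
proof -
  obtain lam where design: "\<And>T::'a option set. card T = 3 \<Longrightarrow> card {X \<in> PSL2_orbit S. T \<subseteq> X} = lam"
    using assms(1) unfolding starter_3design_def by blast
  define C where "C c P Q R \<longleftrightarrow> distinct [P, Q, R] \<and> nonzero_square (triple_det P Q R) = c"
    for c and P Q R :: "'a option"
  have count: "lam * card {(P, Q, R). C c P Q R}
      = card (PSL2_orbit S) * card {(P, Q, R). C c P Q R \<and> {P, Q, R} \<subseteq> S}" for c
    unfolding PSL2_orbit_def
  proof (rule orbit_design_triple_count[where G = PSL2])
    show "C c (g P) (g Q) (g R) \<longleftrightarrow> C c P Q R" if "g \<in> PSL2" for g P Q R
      using inj_PSL2[OF that] nonzero_square_triple_det_PSL2[OF that]
      unfolding C_def by (auto simp: inj_eq)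
  qed (use inj_PSL2 design in \<open>auto simp: C_def PSL2_orbit_def\<close>)
  have "card {(P, Q, R). C True P Q R} = card {(P, Q, R). C False P Q R}"
  proof -
    obtain n :: 'a where n: "n \<noteq> 0" "\<not> nonzero_square n" using ex_nonsquare[OF assms(2)] by blast
    have "n * 1 - 0 * 0 \<noteq> 0" using n(1) by simp
    then have inj_h: "inj (lft n 0 0 1)" by (rule inj_lft)
    define h3 where "h3 = map_prod (lft n 0 0 1) (map_prod (lft n 0 0 1) (lft n 0 0 1))"
    have "inj h3" unfolding h3_def using inj_h by (simp add: prod.inj_map)
    then have inj: "inj_on h3 A" for A using inj_on_subset by blast
    have "h3 ` {(P, Q, R). C c P Q R} \<subseteq> {(P, Q, R). C (\<not> c) P Q R}" for c
      using nonzero_square_triple_det_scale_by_nonsquare[OF assms(2) n] inj_h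
      unfolding h3_def C_def by (auto simp: inj_eq)
    from this[of True] this[of False] show ?thesis
      by (intro card_bij_eq[OF inj _ inj]) simp_all
  qed
  moreover have "card (PSL2_orbit S) \<noteq> 0"
    using id_in_PSL2 unfolding PSL2_orbit_def by (auto simp: card_eq_0_iff)
  ultimately show ?thesis using count[of True] count[of False] unfolding C_def by simp
qed

section \<open>Subgroups of squares\<close>

locale square_subgroup =
  fixes B :: "'a::{field,finite} set"
  assumes one_in: "1 \<in> B"
    and mult_closed: "x \<in> B \<Longrightarrow> y \<in> B \<Longrightarrow> x * y \<in> B"
    and inverse_closed: "x \<in> B \<Longrightarrow> inverse x \<in> B"
    and square: "x \<in> B \<Longrightarrow> nonzero_square x"
    and minus_one_square: "nonzero_square (-1 :: 'a)"
    and two_nonzero: "(2 :: 'a) \<noteq> 0"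
begin

lemma nonzero: "x \<in> B \<Longrightarrow> x \<noteq> 0"
  using square nonzero_square_imp_nonzero by blast

lemma nonzero_square_minus: "nonzero_square (- d) \<longleftrightarrow> nonzero_square (d :: 'a)"
  using nonzero_square_mult[OF minus_one_square, of d] by simp

definition pairs :: "bool \<Rightarrow> ('a \<times> 'a) set" where
  "pairs c = {(y, z). y \<in> B \<and> z \<in> B \<and> distinct [1, y, z] \<and> nonzero_square (diff_prod 1 y z) = c}"

lemma card_triples_of_class:
  "card {(x, y, z). x \<in> B \<and> y \<in> B \<and> z \<in> B \<and> distinct [x, y, z] \<and> nonzero_square (diff_prod x y z) = c}
    = card B * card (pairs c)"
proof -
  have diff_prod_scale: "nonzero_square (diff_prod x (x * y) (x * z)) \<longleftrightarrow> nonzero_square (diff_prod 1 y z)"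
    if "x \<in> B" for x y z
  proof -
    have "diff_prod x (x * y) (x * z) = x ^ 2 * (x * diff_prod 1 y z)"
      unfolding diff_prod_def by (simp add: algebra_simps power2_eq_square)
    then show ?thesis
      using nonzero_square_mult_square[OF nonzero[OF that]] nonzero_square_mult[OF square[OF that]] by simp
  qed
  define f :: "'a \<times> 'a \<times> 'a \<Rightarrow> 'a \<times> 'a \<times> 'a" where "f = (\<lambda>(x, y, z). (x, x * y, x * z))"
  have "inj_on f (B \<times> pairs c)" unfolding inj_on_def f_def using nonzero by auto
  moreover have "f ` (B \<times> pairs c)
    = {(x, y, z). x \<in> B \<and> y \<in> B \<and> z \<in> B \<and> distinct [x, y, z] \<and> nonzero_square (diff_prod x y z) = c}"
    (is "_ = ?T")
  proof
    show "f ` (B \<times> pairs c) \<subseteq> ?T"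
      using diff_prod_scale nonzero mult_closed unfolding f_def pairs_def by auto
    show "?T \<subseteq> f ` (B \<times> pairs c)"
    proof
      fix t assume "t \<in> ?T"
      then obtain x y z where t: "t = (x, y, z)" "x \<in> B" "y \<in> B" "z \<in> B" "distinct [x, y, z]"
        "nonzero_square (diff_prod x y z) = c" by blast
      have x: "x \<noteq> 0" "inverse x \<in> B" using nonzero inverse_closed t(2) by auto
      have "y / x \<in> B" "z / x \<in> B"
        using mult_closed[OF _ x(2)] t by (simp_all add: divide_inverse)
      moreover have "distinct [1, y / x, z / x]" using t(5) x(1) by (auto simp: divide_eq_1_iff)
      moreover have "nonzero_square (diff_prod 1 (y / x) (z / x)) = c"
        using diff_prod_scale[OF t(2), of "y / x" "z / x"] t(6) x(1) by simp
      ultimately have "(y / x, z / x) \<in> pairs c" unfolding pairs_def by auto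
      moreover have "t = f (x, y / x, z / x)" using t x unfolding f_def by simp
      ultimately show "t \<in> f ` (B \<times> pairs c)" using t(2) by blast
    qed
  qed
  ultimately show ?thesis by (metis card_image card_cartesian_product)
qed

lemma card_pairs_True_plus_False:
  "card (pairs True) + card (pairs False) = (card B - 1) * (card B - 2)"
proof -
  define B' where "B' = B - {1}"
  have "pairs True \<union> pairs False = B' \<times> B' - (\<lambda>y. (y, y)) ` B'"
    unfolding pairs_def B'_def by auto
  moreover have "card (B' \<times> B' - (\<lambda>y. (y, y)) ` B') = card B' * card B' - card B'"
    by (subst card_Diff_subset) (auto simp: card_image inj_on_def card_cartesian_product)
  moreover have "card (pairs True \<union> pairs False) = card (pairs True) + card (pairs False)"
    by (rule card_Un_disjoint) (auto simp: pairs_def)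
  moreover have "card B' = card B - 1" unfolding B'_def using one_in by simp
  ultimately show ?thesis by (simp add: diff_mult_distrib2)
qed

lemma pairs_swap: "(y, z) \<in> pairs c \<Longrightarrow> (z, y) \<in> pairs c"
proof -
  have "diff_prod 1 z y = - diff_prod 1 y z" unfolding diff_prod_def by (simp add: algebra_simps)
  then show "(y, z) \<in> pairs c \<Longrightarrow> (z, y) \<in> pairs c"
    unfolding pairs_def using nonzero_square_minus by auto
qed

lemma pairs_inverse: "(y, z) \<in> pairs c \<Longrightarrow> (inverse y, inverse z) \<in> pairs c"
proof -
  assume yz: "(y, z) \<in> pairs c"
  then have y: "y \<in> B" "y \<noteq> 0" "y \<noteq> 1" and z: "z \<in> B" "z \<noteq> 0" "z \<noteq> 1" and "y \<noteq> z"
    unfolding pairs_def using nonzero by auto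
  have "diff_prod 1 (inverse y) (inverse z) = (inverse (y * z)) ^ 2 * (- diff_prod 1 y z)"
    unfolding diff_prod_def using y z by (simp add: field_simps power2_eq_square)
  then have "nonzero_square (diff_prod 1 (inverse y) (inverse z)) \<longleftrightarrow> nonzero_square (diff_prod 1 y z)"
    using nonzero_square_mult_square[of "inverse (y * z)"] nonzero_square_minus y z by simp
  moreover have "distinct [1, inverse y, inverse z]" using y z \<open>y \<noteq> z\<close> by auto
  ultimately show ?thesis using yz inverse_closed y z unfolding pairs_def by auto
qed

lemma pairs_rotate: "(y, z) \<in> pairs c \<Longrightarrow> (z * inverse y, inverse y) \<in> pairs c"
proof -
  assume yz: "(y, z) \<in> pairs c"
  then have y: "y \<in> B" "y \<noteq> 0" "y \<noteq> 1" and z: "z \<in> B" "z \<noteq> 0" "z \<noteq> 1" and "y \<noteq> z"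
    unfolding pairs_def using nonzero by auto
  have "diff_prod 1 (z * inverse y) (inverse y) = (inverse y) ^ 2 * (inverse y * diff_prod 1 y z)"
    unfolding diff_prod_def using y z by (simp add: field_simps power2_eq_square)
  then have "nonzero_square (diff_prod 1 (z * inverse y) (inverse y)) \<longleftrightarrow> nonzero_square (diff_prod 1 y z)"
    using nonzero_square_mult_square[of "inverse y"] nonzero_square_mult[OF square[OF inverse_closed[OF y(1)]]] y
    by simp
  moreover have "distinct [1, z * inverse y, inverse y]" using y z \<open>y \<noteq> z\<close> by (auto simp: field_simps)
  moreover have "z * inverse y \<in> B" "inverse y \<in> B" using mult_closed inverse_closed y z by auto
  ultimately show ?thesis using yz unfolding pairs_def by auto
qed

lemma card_cube_root_reciprocal_pairs:
  "card {y. y ^ 3 = 1 \<and> (y, inverse y) \<in> pairs c} \<in> {0, 2}"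
proof -
  define Cube where "Cube = {y :: 'a. y ^ 3 = 1 \<and> (y, inverse y) \<in> pairs c}"
  have "even (card Cube)"
  proof (rule even_card_if_involution[where f = inverse])
    fix y assume "y \<in> Cube"
    then have y: "y ^ 3 = 1" "(y, inverse y) \<in> pairs c" unfolding Cube_def by auto
    then have "(inverse y, inverse (inverse y)) \<in> pairs c" using pairs_swap by simp
    moreover have "inverse y \<noteq> y" using y(2) unfolding pairs_def by auto
    ultimately show "inverse y \<in> Cube \<and> inverse (inverse y) = y \<and> inverse y \<noteq> y"
      using y(1) unfolding Cube_def by (simp add: power_inverse)
  qed simp
  moreover have "card Cube \<le> card ({y::'a. y ^ 3 = 1} - {1})"
    by (rule card_mono) (auto simp: Cube_def pairs_def)
  moreover have "card ({y::'a. y ^ 3 = 1} - {1}) \<le> 2"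
    using card_roots_of_unity_le[of 3, where 'a = 'a] by (simp add: card_Diff_singleton_if)
  ultimately have "card Cube = 0 \<or> card Cube = 2" by presburger
  then show ?thesis unfolding Cube_def by simp
qed

lemma card_pairs_mod_3: "card (pairs c) mod 3 \<noteq> 1"
proof -
  \<comment> \<open>The cyclic shift (1, y, z) to (y, z, 1), rescaled by 1/y; its fixed points are the pairs
    (w, 1/w) with w a primitive cube root of unity.\<close>
  define rot :: "'a \<times> 'a \<Rightarrow> 'a \<times> 'a" where "rot = (\<lambda>(y, z). (z * inverse y, inverse y))"
  define Fix where "Fix = {p \<in> pairs c. rot p = p}"
  have rot_pairs: "rot p \<in> pairs c" if "p \<in> pairs c" for p
    using pairs_rotate that unfolding rot_def by (auto split: prod.splits)
  have rot3: "rot (rot (rot p)) = p" if p: "p \<in> pairs c" for p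
  proof -
    obtain y z where "p = (y, z)" "y \<noteq> 0" "z \<noteq> 0"
      using p nonzero unfolding pairs_def by auto
    then show ?thesis unfolding rot_def by (simp add: field_simps)
  qed
  have "Fix = (\<lambda>y. (y, inverse y)) ` {y. y ^ 3 = 1 \<and> (y, inverse y) \<in> pairs c}"
  proof (intro equalityI subsetI)
    fix p assume "p \<in> Fix"
    then obtain y z where p: "p = (y, z)" "(y, z) \<in> pairs c" "z * inverse y = y" "inverse y = z"
      unfolding Fix_def rot_def by (auto split: prod.splits)
    then have "y \<noteq> 0" using nonzero unfolding pairs_def by auto
    then have "y ^ 3 = 1" using p(3,4) by (simp add: field_simps power3_eq_cube)
    then show "p \<in> (\<lambda>y. (y, inverse y)) ` {y. y ^ 3 = 1 \<and> (y, inverse y) \<in> pairs c}" using p by auto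
  next
    fix p assume "p \<in> (\<lambda>y. (y, inverse y)) ` {y. y ^ 3 = 1 \<and> (y, inverse y) \<in> pairs c}"
    then obtain y where y: "p = (y, inverse y)" "y ^ 3 = 1" "(y, inverse y) \<in> pairs c" by auto
    then have "y \<noteq> 0" by auto
    then have "inverse y * inverse y = y" using y(2) by (simp add: field_simps power3_eq_cube)
    then show "p \<in> Fix" using y unfolding Fix_def rot_def by simp
  qed
  then have "card Fix = 0 \<or> card Fix = 2"
    using card_cube_root_reciprocal_pairs[of c] by (simp add: card_image inj_on_def)
  moreover have "3 dvd card (pairs c - Fix)"
  proof (rule three_dvd_card_if_order_three[where f = rot])
    fix p assume p: "p \<in> pairs c - Fix"
    then have p_pairs: "p \<in> pairs c" and "rot p \<noteq> p" unfolding Fix_def by auto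
    moreover have "rot (rot p) \<noteq> rot p"
    proof
      assume "rot (rot p) = rot p"
      then have "rot (rot (rot p)) = rot p" by simp
      then show False using rot3[OF p_pairs] \<open>rot p \<noteq> p\<close> by simp
    qed
    ultimately show "rot p \<in> pairs c - Fix \<and> rot (rot (rot p)) = p \<and> rot p \<noteq> p"
      using rot_pairs rot3 unfolding Fix_def by blast
  qed simp
  moreover have "card (pairs c) = card Fix + card (pairs c - Fix)"
    using card_Diff_subset[of Fix "pairs c"] card_mono[of "pairs c" Fix] unfolding Fix_def by auto
  ultimately show ?thesis by presburger
qed

lemma card_pairs_mod_4: "card (pairs c) mod 4 = card {y. (y, inverse y) \<in> pairs c} mod 4"
proof -
  define Recip where "Recip = {p \<in> pairs c. snd p = inverse (fst p)}"
  have "Recip = (\<lambda>y. (y, inverse y)) ` {y. (y, inverse y) \<in> pairs c}"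
    unfolding Recip_def by force
  then have "card Recip = card {y. (y, inverse y) \<in> pairs c}" by (simp add: card_image inj_on_def)
  moreover have "4 dvd card (pairs c - Recip)"
  proof (rule four_dvd_card_if_free_klein_action[where f = prod.swap and g = "map_prod inverse inverse"])
    fix p assume p: "p \<in> pairs c - Recip"
    then obtain y z where yz: "p = (y, z)" "(y, z) \<in> pairs c" "z \<noteq> inverse y"
      unfolding Recip_def by (cases p) auto
    then have y: "y \<noteq> 0" "y \<noteq> 1" and z: "z \<noteq> 0" "z \<noteq> 1" and "y \<noteq> z"
      unfolding pairs_def using nonzero by auto
    have "(inverse y, inverse z) \<noteq> (y, z)"
    proof
      assume "(inverse y, inverse z) = (y, z)"
      then have "y * y = 1" "z * z = 1" using y z by (auto simp: field_simps)
      then have "y = -1" "z = -1" using y(2) z(2) by (auto simp: square_eq_1_iff)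
      then show False using \<open>y \<noteq> z\<close> by simp
    qed
    moreover have "y \<noteq> inverse z" "inverse z \<noteq> y" using yz(3) by auto
    ultimately show "prod.swap p \<in> pairs c - Recip \<and> map_prod inverse inverse p \<in> pairs c - Recip \<and>
        prod.swap (prod.swap p) = p \<and> map_prod inverse inverse (map_prod inverse inverse p) = p \<and>
        prod.swap (map_prod inverse inverse p) = map_prod inverse inverse (prod.swap p) \<and>
        prod.swap p \<noteq> p \<and> map_prod inverse inverse p \<noteq> p \<and> prod.swap (map_prod inverse inverse p) \<noteq> p"
      using yz pairs_swap[OF yz(2)] pairs_inverse[OF yz(2)] \<open>y \<noteq> z\<close> unfolding Recip_def by auto
  qed simp
  moreover have "card (pairs c) = card Recip + card (pairs c - Recip)"
    using card_Diff_subset[of Recip "pairs c"] card_mono[of "pairs c" Recip] unfolding Recip_def by auto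
  ultimately show ?thesis by presburger
qed

lemma even_card_reciprocal_pairs: "even (card {y. (y, inverse y) \<in> pairs c})"
proof (rule even_card_if_involution[where f = inverse])
  fix y assume "y \<in> {y. (y, inverse y) \<in> pairs c}"
  then have y: "(y, inverse y) \<in> pairs c" by simp
  then have "(inverse y, inverse (inverse y)) \<in> pairs c" using pairs_swap by simp
  moreover have "inverse y \<noteq> y" using y unfolding pairs_def by auto
  ultimately show "inverse y \<in> {y. (y, inverse y) \<in> pairs c} \<and> inverse (inverse y) = y \<and> inverse y \<noteq> y"
    by simp
qed simp

lemma even_card_pairs: "even (card (pairs c))"
  using card_pairs_mod_4[of c] even_card_reciprocal_pairs[of c] by presburger

lemma pairs_reciprocal_minus:
  assumes "-1 \<in> B" "(y, inverse y) \<in> pairs c"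
  shows "(- y, inverse (- y)) \<in> pairs c"
proof -
  have y: "y \<in> B" "y \<noteq> 0" "y \<noteq> 1" "y \<noteq> inverse y"
    using assms(2) nonzero unfolding pairs_def by auto
  have "y \<noteq> -1" using y(4) by auto
  then have "1 - y \<noteq> 0" "1 + y \<noteq> 0" using y(3) by (auto simp: add_eq_0_iff2 minus_equation_iff)
  have "(1 - y) ^ 2 * diff_prod 1 (- y) (inverse (- y)) = (1 + y) ^ 2 * diff_prod 1 y (inverse y)"
    unfolding diff_prod_def using y(2) by (simp add: field_simps power2_eq_square)
  then have "diff_prod 1 (- y) (inverse (- y)) = ((1 + y) / (1 - y)) ^ 2 * diff_prod 1 y (inverse y)"
    using \<open>1 - y \<noteq> 0\<close> by (simp add: power_divide field_simps)
  then have "nonzero_square (diff_prod 1 (- y) (inverse (- y))) \<longleftrightarrow> nonzero_square (diff_prod 1 y (inverse y))"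
    using nonzero_square_mult_square[of "(1 + y) / (1 - y)"] \<open>1 - y \<noteq> 0\<close> \<open>1 + y \<noteq> 0\<close>
    by (simp only: divide_eq_0_iff de_Morgan_disj simp_thms)
  moreover have "- y \<in> B" "inverse (- y) \<in> B" using mult_closed[OF assms(1) y(1)] inverse_closed[of "- y"] by auto
  moreover have "inverse y \<noteq> -1" using \<open>y \<noteq> -1\<close> by (metis inverse_inverse_eq inverse_minus_eq inverse_1)
  then have "distinct [1, - y, inverse (- y)]"
    using y \<open>y \<noteq> -1\<close> by (auto simp: inverse_minus_eq minus_equation_iff)
  ultimately show ?thesis using assms(2) unfolding pairs_def by auto
qed

lemma four_dvd_card_pairs:
  assumes "-1 \<in> B" "\<And>y. y \<in> B \<Longrightarrow> y ^ 2 \<noteq> -1"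
  shows "4 dvd card (pairs c)"
proof -
  have "4 dvd card {y. (y, inverse y) \<in> pairs c}"
  proof (rule four_dvd_card_if_free_klein_action[where f = uminus and g = inverse])
    fix y assume "y \<in> {y. (y, inverse y) \<in> pairs c}"
    then have yc: "(y, inverse y) \<in> pairs c" by simp
    then have y: "y \<in> B" "y \<noteq> 0" "y \<noteq> inverse y" using nonzero unfolding pairs_def by auto
    have "- y \<noteq> y" using y(2) two_nonzero by (metis add_eq_0_iff2 mult_2 mult_eq_0_iff neg_equal_iff_equal)
    moreover have "- inverse y \<noteq> y"
    proof
      assume "- inverse y = y"
      then have "y ^ 2 = -1" using y(2) by (auto simp: field_simps power2_eq_square)
      then show False using assms(2)[OF y(1)] by simp
    qed
    moreover have "(inverse y, inverse (inverse y)) \<in> pairs c" using pairs_swap[OF yc] by simp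
    ultimately show "- y \<in> {y. (y, inverse y) \<in> pairs c} \<and> inverse y \<in> {y. (y, inverse y) \<in> pairs c} \<and>
        - (- y) = y \<and> inverse (inverse y) = y \<and> - inverse y = inverse (- y) \<and>
        - y \<noteq> y \<and> inverse y \<noteq> y \<and> - inverse y \<noteq> y"
      using pairs_reciprocal_minus[OF assms(1) yc] y(3) by (auto simp: inverse_minus_eq)
  qed simp
  then show ?thesis using card_pairs_mod_4[of c] by presburger
qed

lemma card_pairs_eq_if_starter:
  assumes "starter_3design (Some ` B)" "odd CARD('a)"
  shows "card (pairs True) = card (pairs False)"
proof -
  have "card {(P, Q, R). distinct [P, Q, R] \<and> nonzero_square (triple_det P Q R) = c \<and> {P, Q, R} \<subseteq> Some ` B}
      = card B * card (pairs c)" for c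
  proof -
    define Some3 :: "'a \<times> 'a \<times> 'a \<Rightarrow> 'a option \<times> 'a option \<times> 'a option"
      where "Some3 = map_prod Some (map_prod Some Some)"
    have "{(P, Q, R). distinct [P, Q, R] \<and> nonzero_square (triple_det P Q R) = c \<and> {P, Q, R} \<subseteq> Some ` B}
      = Some3 ` {(x, y, z). x \<in> B \<and> y \<in> B \<and> z \<in> B \<and> distinct [x, y, z] \<and> nonzero_square (diff_prod x y z) = c}"
      (is "?L = Some3 ` ?R")
    proof (intro equalityI subsetI)
      fix t assume t: "t \<in> ?L"
      then obtain x y z where xyz: "t = Some3 (x, y, z)" "x \<in> B" "y \<in> B" "z \<in> B"
        unfolding Some3_def by auto
      then have "(x, y, z) \<in> ?R" using t unfolding Some3_def by (auto simp: triple_det_Some)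
      then show "t \<in> Some3 ` ?R" using xyz(1) by blast
    qed (auto simp: Some3_def triple_det_Some)
    moreover have "inj Some3" unfolding Some3_def by (simp add: prod.inj_map)
    ultimately show ?thesis using card_triples_of_class by (simp add: card_image inj_on_subset)
  qed
  from this[of True] this[of False] have "card B * card (pairs True) = card B * card (pairs False)"
    using starter_3design_square_balance[OF assms] by simp
  moreover have "card B \<noteq> 0" using one_in by (auto simp: card_eq_0_iff)
  ultimately show ?thesis by simp
qed

end

section \<open>The subgroup of order k\<close>

lemma square_subgroup_mult_subgroup:
  assumes "CARD('a::{field,finite}) mod 4 = 1" "k dvd CARD('a) - 1" "even ((CARD('a) - 1) div k)"
  shows "square_subgroup (mult_subgroup k :: 'a set)"
proof
  define h where "h = (CARD('a) - 1) div 2"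
  have odd: "odd CARD('a)" using assms(1) by presburger
  obtain e where e: "CARD('a) - 1 = k * e" using assms(2) by blast
  have "k \<noteq> 0" using e card_field_ge_two[where 'a = 'a] by (cases "k = 0") auto
  then have "even e" using assms(3) e by simp
  then have h: "h = k * (e div 2)" unfolding h_def e by auto
  show "nonzero_square x" if "x \<in> mult_subgroup k" for x :: 'a
  proof -
    have "x ^ h = 1" using that unfolding h mult_subgroup_def by (simp add: power_mult)
    then show ?thesis using nonzero_square_iff_power_half[OF odd] unfolding h_def by blast
  qed
  have "even h" using assms(1) unfolding h_def by presburger
  then show "nonzero_square (-1 :: 'a)" using nonzero_square_iff_power_half[OF odd] unfolding h_def by simp
  show "(2::'a) \<noteq> 0" using two_neq_zero_if_odd_card[OF odd] .
qed (auto simp: mult_subgroup_def power_mult_distrib power_inverse)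

lemma minus_one_in_mult_subgroup: "even k \<Longrightarrow> (-1 :: 'a::field) \<in> mult_subgroup k"
  unfolding mult_subgroup_def by simp

lemma power2_neq_minus_one_if_in_mult_subgroup:
  fixes y :: "'a::field"
  assumes "k mod 4 = 2" "(2::'a) \<noteq> 0" "y \<in> mult_subgroup k"
  shows "y ^ 2 \<noteq> -1"
proof
  assume "y ^ 2 = -1"
  have "odd (k div 2)" "k = 2 * (k div 2)" using assms(1) by presburger+
  then have "y ^ k = -1" using \<open>y ^ 2 = -1\<close> by (metis power_mult power_minus_odd power_one)
  moreover have "y ^ k = 1" using assms(3) unfolding mult_subgroup_def by simp
  ultimately have "(2::'a) = 0" by (metis one_add_one neg_eq_iff_add_eq_0)
  with assms(2) show False ..
qed

lemma card_power_fibre_le: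
  fixes t :: "'a::{field,finite}"
  shows "card {x \<in> UNIV - {0}. x ^ k = t} \<le> card (mult_subgroup k :: 'a set)"
proof (cases "\<exists>x0. x0 \<noteq> 0 \<and> x0 ^ k = t")
  case True
  then obtain x0 :: 'a where x0: "x0 \<noteq> 0" "x0 ^ k = t" by blast
  have "{x \<in> UNIV - {0}. x ^ k = t} \<subseteq> (*) x0 ` mult_subgroup k"
  proof
    fix x assume x: "x \<in> {x \<in> UNIV - {0}. x ^ k = t}"
    then have "x / x0 \<in> mult_subgroup k" using x0 unfolding mult_subgroup_def by (auto simp: power_divide)
    moreover have "x = x0 * (x / x0)" using x0 by simp
    ultimately show "x \<in> (*) x0 ` mult_subgroup k" by blast
  qed
  then show ?thesis by (rule surj_card_le[OF finite])
next
  case False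
  then have empty: "{x \<in> UNIV - {0}. x ^ k = t} = {}" by auto
  show ?thesis unfolding empty by simp
qed

lemma card_mult_subgroup:
  assumes "k dvd CARD('a::{field,finite}) - 1"
  shows "card (mult_subgroup k :: 'a set) = k"
proof -
  obtain e where e: "CARD('a) - 1 = k * e" using assms by blast
  have "k * e \<noteq> 0" using e card_field_ge_two[where 'a = 'a] by linarith
  then have "k \<ge> 1" "e \<ge> 1" by auto
  define B where "B = (mult_subgroup k :: 'a set)"
  have "card B \<le> card {x::'a. x ^ k = 1}" unfolding B_def mult_subgroup_def by (rule card_mono) auto
  also have "\<dots> \<le> k" using card_roots_of_unity_le[OF \<open>k \<ge> 1\<close>] .
  finally have "card B \<le> k" .
  moreover have "k * e \<le> card B * e"
  proof -
    have "card (UNIV - {0::'a}) \<le> card B * card {t::'a. t ^ e = 1}"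
    proof (rule card_le_mult_card_if_fibres_le[where f = "\<lambda>x. x ^ k"])
      show "(\<lambda>x. x ^ k) ` (UNIV - {0}) \<subseteq> {t::'a. t ^ e = 1}"
        using power_card_minus_one[where 'a = 'a] by (auto simp: power_mult[symmetric] e[symmetric])
      show "card {x \<in> UNIV - {0}. x ^ k = t} \<le> card B" for t :: 'a
        unfolding B_def by (rule card_power_fibre_le)
    qed simp
    also have "\<dots> \<le> card B * e" using card_roots_of_unity_le[OF \<open>e \<ge> 1\<close>, where 'a = 'a] by simp
    finally show ?thesis using e by (simp add: card_Diff_subset mult.commute)
  qed
  ultimately show ?thesis using \<open>e \<ge> 1\<close> unfolding B_def by simp
qed

lemma mod_24_if_pair_count:
  fixes k Z :: nat
  assumes "k > 0" and Z: "2 * Z = (k - 1) * (k - 2)"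
    and "even Z" "Z mod 3 \<noteq> 1" "k mod 4 = 2 \<Longrightarrow> 4 dvd Z"
  shows "k mod 24 \<in> {1, 2, 5, 10, 13, 17}"
proof -
  define r where "r = k mod 24"
  have "2 * int Z = (int k - 1) * (int k - 2)"
  proof (cases "k = 1")
    case False
    then have "int ((k - 1) * (k - 2)) = (int k - 1) * (int k - 2)"
      using assms(1) by (simp add: of_nat_diff)
    then show ?thesis using Z by (metis of_nat_mult of_nat_numeral)
  qed (use Z in simp)
  moreover have "(int k mod 24 - 1) mod 24 = (int k - 1) mod 24" "(int k mod 24 - 2) mod 24 = (int k - 2) mod 24"
    by (simp_all add: mod_diff_left_eq)
  ultimately have c: "(2 * int Z) mod 24 = ((int r - 1) * (int r - 2)) mod 24"
    unfolding r_def of_nat_mod of_nat_numeral by (metis mod_mult_eq)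
  have "(2 * int Z) mod 24 mod 4 = 0" using assms(3) by (auto simp: mod_mod_cancel elim!: evenE)
  moreover have "(2 * int Z) mod 24 mod 3 \<noteq> 2"
  proof -
    have "int Z mod 3 \<noteq> 1" using assms(4) by (metis of_nat_mod of_nat_1 of_nat_eq_iff of_nat_numeral)
    then show ?thesis by (simp add: mod_mod_cancel) presburger
  qed
  moreover have "(2 * int Z) mod 24 mod 8 = 0" if "r mod 4 = 2"
  proof -
    have "k mod 4 = 2" using that unfolding r_def by (simp add: mod_mod_cancel)
    then show ?thesis using assms(5) by (auto simp: mod_mod_cancel elim!: dvdE)
  qed
  moreover have "r = 0 \<or> r = 1 \<or> r = 2 \<or> r = 3 \<or> r = 4 \<or> r = 5 \<or> r = 6 \<or> r = 7 \<or> r = 8 \<or> r = 9 \<or>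
    r = 10 \<or> r = 11 \<or> r = 12 \<or> r = 13 \<or> r = 14 \<or> r = 15 \<or> r = 16 \<or> r = 17 \<or> r = 18 \<or> r = 19 \<or>
    r = 20 \<or> r = 21 \<or> r = 22 \<or> r = 23"
    unfolding r_def by presburger
  ultimately show ?thesis unfolding c r_def[symmetric] by (elim disjE) simp_all
qed

theorem theorem3p1:
  fixes q k :: nat
  assumes "card (UNIV :: 'a::{field,finite} set) = q"
    and "\<exists>p n. prime p \<and> odd p \<and> n > 0 \<and> q = p ^ n"
    and "q mod 4 = 1"
    and "k dvd q - 1"
    and "even ((q - 1) div k)"
    and "gives_3design TYPE('a) k"
  shows "k mod 24 \<in> {1, 2, 5, 10, 13, 17}"
proof -
  interpret square_subgroup "mult_subgroup k :: 'a set"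
    using square_subgroup_mult_subgroup assms(1,3-5) by blast
  have odd: "odd CARD('a)" using assms(1,3) by presburger
  have card_B: "card (mult_subgroup k :: 'a set) = k" using card_mult_subgroup assms(1,4) by blast
  then have "k > 0" using one_in card_gt_0_iff[of "mult_subgroup k :: 'a set"] by auto
  have "card (pairs True) = card (pairs False)"
    using card_pairs_eq_if_starter assms(6) odd unfolding gives_3design_def by blast
  then have "2 * card (pairs False) = (k - 1) * (k - 2)"
    using card_pairs_True_plus_False card_B by simp
  moreover have "4 dvd card (pairs False)" if "k mod 4 = 2"
  proof -
    have "even k" using that by presburger
    then show ?thesis using four_dvd_card_pairs minus_one_in_mult_subgroup
        power2_neq_minus_one_if_in_mult_subgroup[OF that two_nonzero] by blast
  qed
  ultimately show ?thesis
    using mod_24_if_pair_count \<open>k > 0\<close> even_card_pairs card_pairs_mod_3 by blast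
qed

end
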